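(* Let $p$ be a prime, let $$\Gamma = \left\{ \begin{pmatrix}1&x_{12}&x_{13}&x_{14}\\ 0 &p^k&x_{23}&x_{24}\\0&0&p^n&x_{34}\\0&0&0&1 \end{pmatrix} : x_{ij}\in \mathbb Z[1/p], \ k, n\in \mathbb Z\right\}$$ (Abels's group) and let $N\le\Gamma$ be the central subgroup of matrices of the form $I+xE_{14}$ with $x\in\mathbb Z$ (identity matrix with $x$ in the $(1,4)$ entry). Then the amalgamated free product $\Gamma \ast_{N=N} \Gamma$ is not maximally almost periodic.
   Context: A group is maximally almost periodic (MAP) if its finite-dimensional unitary representations separate its points. $\Gamma\ast_{N=N}\Gamma$ denotes the free product of two copies of $\Gamma$ amalgamated along the identity map of $N$. *)

theory Defs
  imports "Jordan_Normal_Form.Matrix" "HOL-Algebra.Group"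
begin

definition conj_transpose :: "complex mat \<Rightarrow> complex mat" where
  "conj_transpose A = mat (dim_col A) (dim_row A) (\<lambda>(i,j). cnj (A $$ (j,i)))"

definition unitary_group :: "nat \<Rightarrow> complex mat monoid" where
  "unitary_group n =
     \<lparr> carrier = {A. A \<in> carrier_mat n n \<and> A * conj_transpose A = 1\<^sub>m n},
       mult = (\<lambda>A B. A * B),
       one = 1\<^sub>m n \<rparr>"

definition MAP :: "('a, 'b) monoid_scheme \<Rightarrow> bool" where
  "MAP G \<longleftrightarrow> (\<forall>g \<in> carrier G. \<forall>h \<in> carrier G. g \<noteq> h \<longrightarrow>
      (\<exists>n \<rho>. \<rho> \<in> hom G (unitary_group n) \<and> \<rho> g \<noteq> \<rho> h))"

text \<open>Words are lists of letters (b, g) with g in the group and b selecting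
  the copy (False = first copy, True = second copy).\<close>

inductive amalg_eq :: "('a, 'b) monoid_scheme \<Rightarrow> 'a set \<Rightarrow> (bool \<times> 'a) list \<Rightarrow> (bool \<times> 'a) list \<Rightarrow> bool"
  for G :: "('a, 'b) monoid_scheme" and H :: "'a set" where
  refl: "amalg_eq G H w w"
| sym: "amalg_eq G H v w \<Longrightarrow> amalg_eq G H w v"
| trans: "amalg_eq G H u v \<Longrightarrow> amalg_eq G H v w \<Longrightarrow> amalg_eq G H u w"
| merge: "x \<in> carrier G \<Longrightarrow> y \<in> carrier G \<Longrightarrow> amalg_eq G H (u @ [(b, x), (b, y)] @ v) (u @ [(b, x \<otimes>\<^bsub>G\<^esub> y)] @ v)"
| unit: "amalg_eq G H (u @ [(b, \<one>\<^bsub>G\<^esub>)] @ v) (u @ v)"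
| ident: "h \<in> H \<Longrightarrow> amalg_eq G H (u @ [(False, h)] @ v) (u @ [(True, h)] @ v)"

definition amalg_words :: "('a, 'b) monoid_scheme \<Rightarrow> (bool \<times> 'a) list set" where
  "amalg_words G = {w. \<forall>l \<in> set w. snd l \<in> carrier G}"

definition amalg_class :: "('a, 'b) monoid_scheme \<Rightarrow> 'a set \<Rightarrow> (bool \<times> 'a) list \<Rightarrow> (bool \<times> 'a) list set" where
  "amalg_class G H w = {v \<in> amalg_words G. amalg_eq G H w v}"

definition amalg_product :: "('a, 'b) monoid_scheme \<Rightarrow> 'a set \<Rightarrow> (bool \<times> 'a) list set monoid" where
  "amalg_product G H =
     \<lparr> carrier = amalg_class G H ` amalg_words G,
       mult = (\<lambda>X Y. amalg_class G H ((SOME x. x \<in> X) @ (SOME y. y \<in> Y))),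
       one = amalg_class G H [] \<rparr>"

definition Zinvp :: "nat \<Rightarrow> rat set" where
  "Zinvp p = {q. \<exists>a::int. \<exists>m::nat. q = of_int a / of_nat p ^ m}"

definition abels_group :: "nat \<Rightarrow> rat mat monoid" where
  "abels_group p =
     \<lparr> carrier = {A. A \<in> carrier_mat 4 4 \<and>
          (\<exists>k n :: int. A $$ (0,0) = 1 \<and> A $$ (1,1) = of_nat p powi k \<and>
                        A $$ (2,2) = of_nat p powi n \<and> A $$ (3,3) = 1) \<and>
          (\<forall>i<4. \<forall>j<4. j < i \<longrightarrow> A $$ (i,j) = 0) \<and>
          (\<forall>i<4. \<forall>j<4. i < j \<longrightarrow> A $$ (i,j) \<in> Zinvp p)},
       mult = (\<lambda>A B. A * B),
       one = 1\<^sub>m 4 \<rparr>"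

text \<open>The central subgroup N = {I + x E_14 : x in Z} (0-based index (0,3)).\<close>

definition abels_N :: "rat mat set" where
  "abels_N = {1\<^sub>m 4 + mat 4 4 (\<lambda>(i,j). if (i,j) = (0,3) then of_int x else 0) | x :: int. True}"

end

(*
  In Abels's group the dilation diag(1, p, 1, 1) conjugates u^p to u, where u = I + E_12.
  In a unitary representation the image of u is therefore conjugate to its p-th power; its
  spectrum is closed under l \<mapsto> l ^ p, so its eigenvalues are roots of unity, and being
  unitary it has finite order K.  Writing K = p^e M with p not dividing M, the commutator of u^K with
  I + p^-(e+1) E_24 is I + (M/p) E_14, which therefore lies in the kernel.  Consequently, in any
  unitary representation of the amalgam, the two copies of z = I + (1/p) E_14 have the same
  image as a common integral element I + c E_14 of N.

  On the other hand the two copies of z are different: the amalgam acts on 4 x 4 matrices, the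
  first copy by left multiplication and the second by left multiplication conjugated with the
  involution that swaps the integers and the coset Z + 1/p in the entry (1,4).  This involution
  commutes with N, and the two copies of z act differently on the identity matrix.
*)
theory Submission
  imports Defs "Jordan_Normal_Form.Schur_Decomposition" "Jordan_Normal_Form.Spectral_Radius"
    "Jordan_Normal_Form.Jordan_Normal_Form_Uniqueness"
begin

section \<open>Unitary matrices\<close>

lemma conj_transpose_carrier_mat [simp]:
  "A \<in> carrier_mat n m \<Longrightarrow> conj_transpose A \<in> carrier_mat m n"
  unfolding conj_transpose_def by auto

lemma dim_conj_transpose [simp]:
  "dim_row (conj_transpose A) = dim_col A" "dim_col (conj_transpose A) = dim_row A"
  unfolding conj_transpose_def by auto

lemma index_conj_transpose [simp]:
  "i < dim_col A \<Longrightarrow> j < dim_row A \<Longrightarrow>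
    conj_transpose A $$ (i, j) = cnj (A $$ (j, i))"
  unfolding conj_transpose_def by auto

lemma conj_transpose_one [simp]: "conj_transpose (1\<^sub>m n) = 1\<^sub>m n"
  by (rule eq_matI) (auto simp: conj_transpose_def)

lemma conj_transpose_minus:
  "A \<in> carrier_mat n m \<Longrightarrow> B \<in> carrier_mat n m \<Longrightarrow>
    conj_transpose (A - B) = conj_transpose A - conj_transpose B"
  by (rule eq_matI) auto

lemma conj_transpose_mult:
  assumes "A \<in> carrier_mat n m" "B \<in> carrier_mat m k"
  shows "conj_transpose (A * B) = conj_transpose B * conj_transpose A"
proof (rule eq_matI)
  fix i j assume "i < dim_row (conj_transpose B * conj_transpose A)"
    "j < dim_col (conj_transpose B * conj_transpose A)"
  with assms have "i < k" "j < n" by auto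
  with assms show
    "conj_transpose (A * B) $$ (i, j) = (conj_transpose B * conj_transpose A) $$ (i, j)"
    by (simp add: scalar_prod_def mult.commute)
qed (use assms in auto)

lemma mult_conj_transpose_self_eq_zero:
  assumes Y: "Y \<in> carrier_mat n m" and "Y * conj_transpose Y = 0\<^sub>m n n"
  shows "Y = 0\<^sub>m n m"
proof (rule eq_matI)
  fix i j assume "i < dim_row (0\<^sub>m n m)" "j < dim_col (0\<^sub>m n m)"
  hence i: "i < n" and j: "j < m" by auto
  have "(\<Sum>l<m. Y $$ (i, l) * cnj (Y $$ (i, l))) = (Y * conj_transpose Y) $$ (i, i)"
    using Y i by (simp add: scalar_prod_def atLeast0LessThan)
  also have "\<dots> = 0" using assms(2) i by simp
  finally have "(\<Sum>l<m. complex_of_real ((cmod (Y $$ (i, l)))\<^sup>2)) = 0"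
    by (simp only: complex_norm_square)
  hence "(\<Sum>l<m. (cmod (Y $$ (i, l)))\<^sup>2) = 0"
    by (metis of_real_eq_0_iff of_real_sum)
  hence "(cmod (Y $$ (i, j)))\<^sup>2 = 0"
    using j by (subst (asm) sum_nonneg_eq_0_iff) auto
  thus "Y $$ (i, j) = 0\<^sub>m n m $$ (i, j)" using i j by simp
qed (use Y in auto)

lemma unitary_group_carrier_iff:
  "A \<in> carrier (unitary_group n) \<longleftrightarrow> A \<in> carrier_mat n n \<and> A * conj_transpose A = 1\<^sub>m n"
  unfolding unitary_group_def by simp

lemma unitary_group_mult [simp]: "A \<otimes>\<^bsub>unitary_group n\<^esub> B = A * B"
  unfolding unitary_group_def by simp

lemma unitary_conj_transpose_mult_self:
  "A \<in> carrier (unitary_group n) \<Longrightarrow> conj_transpose A * A = 1\<^sub>m n"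
  using mat_mult_left_right_inverse[of A n "conj_transpose A"]
  by (simp add: unitary_group_carrier_iff)

lemma unitary_mult_closed:
  assumes "A \<in> carrier (unitary_group n)" "B \<in> carrier (unitary_group n)"
  shows "A * B \<in> carrier (unitary_group n)"
proof -
  have A: "A \<in> carrier_mat n n" "A * conj_transpose A = 1\<^sub>m n"
    and B: "B \<in> carrier_mat n n" "B * conj_transpose B = 1\<^sub>m n"
    using assms by (auto simp: unitary_group_carrier_iff)
  have At: "conj_transpose A \<in> carrier_mat n n" and Bt: "conj_transpose B \<in> carrier_mat n n"
    using A B by auto
  have "A * B * conj_transpose (A * B) = A * (B * (conj_transpose B * conj_transpose A))"
    using conj_transpose_mult[OF A(1) B(1)] assoc_mult_mat[OF A(1) B(1) mult_carrier_mat[OF Bt At]]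
    by simp
  also have "\<dots> = A * ((B * conj_transpose B) * conj_transpose A)"
    using assoc_mult_mat[OF B(1) Bt At] by simp
  also have "\<dots> = 1\<^sub>m n" using A At B by simp
  finally show ?thesis using A B by (simp add: unitary_group_carrier_iff)
qed

lemma unitary_pow_closed:
  "A \<in> carrier (unitary_group n) \<Longrightarrow> A ^\<^sub>m k \<in> carrier (unitary_group n)"
proof (induction k)
  case (Suc k)
  thus ?case using unitary_mult_closed[of "A ^\<^sub>m k" n A] by simp
qed (auto simp: unitary_group_carrier_iff)

lemma unitary_right_cancel:
  assumes X: "X \<in> carrier_mat n n" and S: "S \<in> carrier (unitary_group n)" and "X * S = S"
  shows "X = 1\<^sub>m n"
proof -
  have S': "S \<in> carrier_mat n n" "S * conj_transpose S = 1\<^sub>m n"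
    using S by (auto simp: unitary_group_carrier_iff)
  have "X = X * (S * conj_transpose S)" using X S' by simp
  also have "\<dots> = (X * S) * conj_transpose S"
    using X S' by (simp add: assoc_mult_mat[of X n n S n "conj_transpose S" n])
  also have "\<dots> = 1\<^sub>m n" using assms(3) S' by simp
  finally show ?thesis .
qed

lemma unitary_rep_idempotent:
  assumes rep: "\<rho> \<in> hom G (unitary_group n)" and x: "x \<in> carrier G" "x \<otimes>\<^bsub>G\<^esub> x = x"
  shows "\<rho> x = 1\<^sub>m n"
proof -
  have "\<rho> x \<in> carrier (unitary_group n)" using hom_in_carrier[OF rep x(1)] .
  moreover have "\<rho> x * \<rho> x = \<rho> x" using hom_mult[OF rep x(1) x(1)] x(2) by simp
  ultimately show ?thesis using unitary_right_cancel by (auto simp: unitary_group_carrier_iff)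
qed

lemma unitary_mult_vec_nonzero:
  assumes S: "S \<in> carrier (unitary_group n)" and v: "v \<in> carrier_vec n" "v \<noteq> 0\<^sub>v n"
  shows "S *\<^sub>v v \<noteq> 0\<^sub>v n"
proof
  assume "S *\<^sub>v v = 0\<^sub>v n"
  moreover have "(conj_transpose S * S) *\<^sub>v v = conj_transpose S *\<^sub>v (S *\<^sub>v v)"
    using S v by (intro assoc_mult_mat_vec) (auto simp: unitary_group_carrier_iff)
  ultimately have "(conj_transpose S * S) *\<^sub>v v = 0\<^sub>v n"
    using S by (auto simp: unitary_group_carrier_iff)
  thus False using v unitary_conj_transpose_mult_self[OF S] by simp
qed

lemma minus_mat_eq_0_iff:
  fixes A C :: "'a :: ab_group_add mat"
  assumes "A \<in> carrier_mat n m" "C \<in> carrier_mat n m"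
  shows "A - C = 0\<^sub>m n m \<longleftrightarrow> A = C"
proof
  assume "A - C = 0\<^sub>m n m"
  hence "(A - C) $$ (i, j) = 0" if "i < n" "j < m" for i j using that by simp
  thus "A = C" using assms by (intro eq_matI) auto
qed (use assms in auto)

text \<open>Write \<open>N = B - 1\<close>.  If \<open>Y = X N\<close> satisfies \<open>Y N = 0\<close>, then \<open>Y\<close> is fixed by \<open>B\<close>,
  hence by \<open>B\<^sup>* = B\<^sup>-\<^sup>1\<close>, so \<open>Y N\<^sup>* = 0\<close> and \<open>Y Y\<^sup>* = Y N\<^sup>* X\<^sup>* = 0\<close>.\<close>

lemma unitary_minus_one_kernel_step:
  assumes B: "B \<in> carrier (unitary_group n)" and X: "X \<in> carrier_mat n n"
    and sq: "X * (B - 1\<^sub>m n) * (B - 1\<^sub>m n) = 0\<^sub>m n n"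
  shows "X * (B - 1\<^sub>m n) = 0\<^sub>m n n"
proof -
  have Bc: "B \<in> carrier_mat n n" and BBt: "B * conj_transpose B = 1\<^sub>m n"
    using B by (auto simp: unitary_group_carrier_iff)
  have Bt: "conj_transpose B \<in> carrier_mat n n" using Bc by simp
  define N where "N = B - 1\<^sub>m n"
  define Y where "Y = X * N"
  have N: "N \<in> carrier_mat n n" and Y: "Y \<in> carrier_mat n n"
    using Bc X by (auto simp: N_def Y_def)
  have "Y * B - Y = Y * N" using Y Bc by (simp add: N_def mult_minus_distrib_mat)
  also have "\<dots> = 0\<^sub>m n n" using sq by (simp add: Y_def N_def)
  finally have YB: "Y * B = Y" using Y Bc by (simp add: minus_mat_eq_0_iff)
  have "Y * conj_transpose B = Y * B * conj_transpose B" using YB by simp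
  also have "\<dots> = Y" using assoc_mult_mat[OF Y Bc Bt] BBt Y by simp
  finally have "Y * conj_transpose B = Y" .
  hence "Y * conj_transpose N = 0\<^sub>m n n"
    using Y Bc mult_minus_distrib_mat[OF Y Bt one_carrier_mat]
    by (simp add: N_def conj_transpose_minus)
  hence "Y * conj_transpose Y = 0\<^sub>m n n"
    using assoc_mult_mat[OF Y, of "conj_transpose N" n "conj_transpose X" n] X N
    by (simp add: Y_def conj_transpose_mult)
  thus ?thesis using mult_conj_transpose_self_eq_zero[OF Y] by (simp add: Y_def N_def)
qed

lemma unitary_unipotent_eq_one:
  assumes B: "B \<in> carrier (unitary_group n)" and nil: "(B - 1\<^sub>m n) ^\<^sub>m k = 0\<^sub>m n n"
  shows "B = 1\<^sub>m n"
proof -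
  have Bc: "B \<in> carrier_mat n n" using B by (simp add: unitary_group_carrier_iff)
  define N where "N = B - 1\<^sub>m n"
  have N: "N \<in> carrier_mat n n" using Bc by (simp add: N_def minus_carrier_mat)
  have "N ^\<^sub>m Suc j = 0\<^sub>m n n \<Longrightarrow> N = 0\<^sub>m n n" for j
  proof (induction j)
    case (Suc j)
    have "N ^\<^sub>m j * N * N = 0\<^sub>m n n" using Suc.prems by simp
    hence "N ^\<^sub>m Suc j = 0\<^sub>m n n"
      using unitary_minus_one_kernel_step[OF B, of "N ^\<^sub>m j"] N by (simp add: N_def)
    thus ?case by (rule Suc.IH)
  qed simp
  moreover have "N ^\<^sub>m Suc k = 0\<^sub>m n n" using nil N by (simp add: N_def)
  ultimately have "N = 0\<^sub>m n n" by blast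
  thus ?thesis using Bc by (simp add: N_def minus_mat_eq_0_iff)
qed

section \<open>Unitary matrices conjugate to a power of themselves\<close>

lemma upper_triangular_mult:
  fixes A B :: "'a :: comm_ring_1 mat"
  assumes A: "A \<in> carrier_mat n n" and B: "B \<in> carrier_mat n n"
    and uA: "upper_triangular A" and uB: "upper_triangular B"
  shows "upper_triangular (A * B)"
    and "i < n \<Longrightarrow> (A * B) $$ (i, i) = A $$ (i, i) * B $$ (i, i)"
proof -
  have vanish: "A $$ (i, l) * B $$ (l, j) = 0" if "i < n" "l < n" "l < i \<or> j < l" for i j l
    using that uA uB A B by (auto dest: upper_triangularD)
  show "upper_triangular (A * B)"
  proof (rule upper_triangularI)
    fix i j assume "j < i" "i < dim_row (A * B)"
    hence "(\<Sum>l<n. A $$ (i, l) * B $$ (l, j)) = 0"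
      using A by (intro sum.neutral ballI vanish) auto
    thus "(A * B) $$ (i, j) = 0"
      using A B \<open>j < i\<close> \<open>i < dim_row (A * B)\<close> by (simp add: scalar_prod_def atLeast0LessThan)
  qed
  assume i: "i < n"
  have "(\<Sum>l<n. A $$ (i, l) * B $$ (l, i)) = (\<Sum>l<n. if l = i then A $$ (i, i) * B $$ (i, i) else 0)"
    using vanish[OF i] by (intro sum.cong) (auto simp: nat_neq_iff)
  thus "(A * B) $$ (i, i) = A $$ (i, i) * B $$ (i, i)"
    using A B i by (simp add: scalar_prod_def atLeast0LessThan)
qed

lemma upper_triangular_pow:
  fixes A :: "'a :: comm_ring_1 mat"
  assumes A: "A \<in> carrier_mat n n" and uA: "upper_triangular A"
  shows "upper_triangular (A ^\<^sub>m k) \<and> (\<forall>i<n. (A ^\<^sub>m k) $$ (i, i) = A $$ (i, i) ^ k)"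
proof (induction k)
  case (Suc k)
  have "A ^\<^sub>m k \<in> carrier_mat n n" using A by simp
  from upper_triangular_mult[OF this A _ uA] Suc.IH show ?case by (simp add: mult.commute)
qed (use A in simp)

lemma strictly_upper_triangular_nilpotent:
  fixes N :: "'a :: comm_ring_1 mat"
  assumes N: "N \<in> carrier_mat n n" and strict: "\<And>i j. i < n \<Longrightarrow> j \<le> i \<Longrightarrow> N $$ (i, j) = 0"
  shows "N ^\<^sub>m n = 0\<^sub>m n n"
proof -
  have "\<forall>i<n. \<forall>j<n. j < i + k \<longrightarrow> (N ^\<^sub>m k) $$ (i, j) = 0" for k
  proof (induction k)
    case (Suc k)
    have Nk: "N ^\<^sub>m k \<in> carrier_mat n n" using N by simp
    show ?case
    proof (intro allI impI)
      fix i j assume ij: "i < n" "j < n" "j < i + Suc k"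
      have "(\<Sum>l<n. (N ^\<^sub>m k) $$ (i, l) * N $$ (l, j)) = 0"
      proof (intro sum.neutral ballI)
        fix l assume "l \<in> {..<n}"
        thus "(N ^\<^sub>m k) $$ (i, l) * N $$ (l, j) = 0"
          using Suc.IH strict[of l j] ij by (cases "l < i + k") auto
      qed
      thus "(N ^\<^sub>m Suc k) $$ (i, j) = 0"
        using N Nk ij by (simp add: scalar_prod_def atLeast0LessThan)
    qed
  qed (use N in simp)
  thus ?thesis using N by (intro eq_matI) auto
qed

lemma common_order_of_roots_of_unity:
  fixes L :: "'a :: comm_monoid_mult set"
  assumes "finite L" "\<And>l. l \<in> L \<Longrightarrow> \<exists>e>0. l ^ e = 1"
  shows "\<exists>K>0. \<forall>l\<in>L. l ^ K = 1"
  using assms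
proof (induction L rule: finite_induct)
  case (insert x L)
  then obtain e K where "e > 0" "x ^ e = 1" "K > 0" "\<forall>l\<in>L. l ^ K = 1" by blast
  hence "\<forall>l\<in>insert x L. l ^ (e * K) = 1"
    by (metis insert_iff mult.commute power_mult power_one)
  thus ?case using \<open>e > 0\<close> \<open>K > 0\<close> by (intro exI[of _ "e * K"]) simp
qed auto

lemma pow_minus_one_nilpotent:
  fixes A :: "complex mat"
  assumes A: "A \<in> carrier_mat n n" and roots: "\<And>l. eigenvalue A l \<Longrightarrow> l ^ K = 1"
  shows "(A ^\<^sub>m K - 1\<^sub>m n) ^\<^sub>m n = 0\<^sub>m n n"
proof -
  obtain es where es: "char_poly A = (\<Prod>a\<leftarrow>es. [:- a, 1:])"
    using char_poly_factorized[OF A] by blast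
  obtain T P Q where schur: "schur_decomposition A es = (T, P, Q)"
    by (cases "schur_decomposition A es") auto
  have wit: "similar_mat_wit A T P Q" and uT: "upper_triangular T" and dT: "diag_mat T = es"
    using schur_decomposition[OF A es schur] by auto
  have T: "T \<in> carrier_mat n n" using similar_mat_witD2[OF A wit] by auto
  have "eigenvalue A (T $$ (i, i))" if i: "i < n" for i
  proof -
    have "T $$ (i, i) \<in> set es" using i T unfolding dT[symmetric] diag_mat_def by auto
    hence "poly (char_poly A) (T $$ (i, i)) = 0" unfolding es
      by (induction es) (auto simp: poly_prod_list)
    thus ?thesis using eigenvalue_root_char_poly[OF A] by simp
  qed
  hence uTK: "upper_triangular (T ^\<^sub>m K)" and dTK: "\<And>i. i < n \<Longrightarrow> (T ^\<^sub>m K) $$ (i, i) = 1"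
    using upper_triangular_pow[OF T uT, of K] roots by auto
  define N where "N = char_matrix (T ^\<^sub>m K) 1"
  have N: "N \<in> carrier_mat n n" unfolding N_def using T by simp
  have "N ^\<^sub>m n = 0\<^sub>m n n"
  proof (rule strictly_upper_triangular_nilpotent[OF N])
    fix i j assume "i < n" "j \<le> i"
    thus "N $$ (i, j) = 0"
      using uTK dTK[of i] T upper_triangularD[OF uTK, of j i]
      by (cases "j = i") (simp_all add: N_def char_matrix_def)
  qed
  moreover have "similar_mat_wit (char_matrix (A ^\<^sub>m K) 1 ^\<^sub>m n) (N ^\<^sub>m n) P Q"
    unfolding N_def by (intro similar_mat_wit_pow similar_mat_wit_char_matrix wit)
  ultimately have "char_matrix (A ^\<^sub>m K) 1 ^\<^sub>m n = 0\<^sub>m n n"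
    using similar_mat_witD2(3,6,7)[of "char_matrix (A ^\<^sub>m K) 1 ^\<^sub>m n" n n "N ^\<^sub>m n" P Q] A
    by (metis char_matrix_closed left_mult_zero_mat pow_carrier_mat right_mult_zero_mat)
  moreover have "char_matrix (A ^\<^sub>m K) 1 = A ^\<^sub>m K - 1\<^sub>m n"
    unfolding char_matrix_def using A by (intro eq_matI) auto
  ultimately show ?thesis by simp
qed

lemma unitary_eigenvalue_nonzero:
  assumes A: "A \<in> carrier (unitary_group n)" and "eigenvalue A l"
  shows "l \<noteq> 0"
proof
  assume "l = 0"
  obtain v where v: "eigenvector A v l" using assms(2) unfolding eigenvalue_def by blast
  have "v \<in> carrier_vec n" "v \<noteq> 0\<^sub>v n" "A *\<^sub>v v = 0\<^sub>v n"
    using v A \<open>l = 0\<close> by (auto simp: eigenvector_def unitary_group_carrier_iff)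
  thus False using unitary_mult_vec_nonzero[OF A] by blast
qed

lemma eigenvalue_power_if_conjugate_to_power:
  assumes A: "A \<in> carrier_mat n n" and S: "S \<in> carrier (unitary_group n)"
    and conj: "S * A ^\<^sub>m p = A * S" and "eigenvalue A l"
  shows "eigenvalue A (l ^ p)"
proof -
  obtain v where v: "eigenvector A v l" using assms(4) unfolding eigenvalue_def by blast
  have vc: "v \<in> carrier_vec n" "v \<noteq> 0\<^sub>v n" using v A by (auto simp: eigenvector_def)
  have Sc: "S \<in> carrier_mat n n" using S by (simp add: unitary_group_carrier_iff)
  have "A *\<^sub>v (S *\<^sub>v v) = (S * A ^\<^sub>m p) *\<^sub>v v" using A Sc vc conj by simp
  also have "\<dots> = S *\<^sub>v (A ^\<^sub>m p *\<^sub>v v)"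
    using A Sc vc by (intro assoc_mult_mat_vec) auto
  also have "\<dots> = S *\<^sub>v (l ^ p \<cdot>\<^sub>v v)" using eigenvector_pow[OF A v] by simp
  also have "\<dots> = l ^ p \<cdot>\<^sub>v (S *\<^sub>v v)" using Sc vc by (simp add: mult_mat_vec)
  finally have "eigenvector A (S *\<^sub>v v) (l ^ p)"
    using unitary_mult_vec_nonzero[OF S vc] A Sc vc by (simp add: eigenvector_def)
  thus ?thesis unfolding eigenvalue_def by blast
qed

lemma eigenvalue_root_of_unity_if_conjugate_to_power:
  assumes A: "A \<in> carrier (unitary_group n)" and S: "S \<in> carrier (unitary_group n)"
    and conj: "S * A ^\<^sub>m p = A * S" and p: "1 < p" and "eigenvalue A l"
  shows "\<exists>e>0. l ^ e = 1"
proof -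
  have Ac: "A \<in> carrier_mat n n" using A by (simp add: unitary_group_carrier_iff)
  have "eigenvalue A (l ^ (p ^ i))" for i
  proof (induction i)
    case (Suc i)
    thus ?case using eigenvalue_power_if_conjugate_to_power[OF Ac S conj Suc.IH]
      by (simp add: power_mult[symmetric] mult.commute)
  qed (use assms(5) in simp)
  hence "range (\<lambda>i. l ^ (p ^ i)) \<subseteq> spectrum A" by (auto simp: spectrum_def)
  hence "finite (range (\<lambda>i. l ^ (p ^ i)))"
    using card_finite_spectrum(1)[OF Ac] by (rule finite_subset)
  hence "\<not> inj (\<lambda>i. l ^ (p ^ i))"
    using finite_imageD by blast
  then obtain a b where ab: "a < b" "l ^ (p ^ a) = l ^ (p ^ b)"
    unfolding inj_def by (metis linorder_neqE_nat)
  have lt: "p ^ a < p ^ b" using ab(1) p by (simp add: power_strict_increasing)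
  hence "l ^ (p ^ a) * l ^ (p ^ b - p ^ a) = l ^ (p ^ b)" by (simp flip: power_add)
  hence "l ^ (p ^ a) * l ^ (p ^ b - p ^ a) = l ^ (p ^ a) * 1" using ab(2) by simp
  hence "l ^ (p ^ b - p ^ a) = 1" using unitary_eigenvalue_nonzero[OF A assms(5)] by simp
  thus ?thesis using lt by (intro exI[of _ "p ^ b - p ^ a"]) simp
qed

lemma unitary_finite_order_if_conjugate_to_power:
  assumes A: "A \<in> carrier (unitary_group n)" and S: "S \<in> carrier (unitary_group n)"
    and conj: "S * A ^\<^sub>m p = A * S" and p: "1 < p"
  shows "\<exists>K>0. A ^\<^sub>m K = 1\<^sub>m n"
proof -
  have Ac: "A \<in> carrier_mat n n" using A by (simp add: unitary_group_carrier_iff)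
  obtain K where K: "K > 0" "\<forall>l\<in>spectrum A. l ^ K = 1"
    using common_order_of_roots_of_unity[OF card_finite_spectrum(1)[OF Ac]]
      eigenvalue_root_of_unity_if_conjugate_to_power[OF A S conj p]
    by (auto simp: spectrum_def)
  hence "(A ^\<^sub>m K - 1\<^sub>m n) ^\<^sub>m n = 0\<^sub>m n n"
    using pow_minus_one_nilpotent[OF Ac] by (simp add: spectrum_def)
  thus ?thesis using unitary_unipotent_eq_one[OF unitary_pow_closed[OF A]] K(1) by blast
qed

section \<open>Amalgamated free products of two copies of a group\<close>

lemma amalg_eq_append_right: "amalg_eq G H u v \<Longrightarrow> amalg_eq G H (u @ w) (v @ w)"
proof (induction rule: amalg_eq.induct)
  case (merge x y u b v)
  thus ?case using amalg_eq.merge[of x G y H u b "v @ w"] by simp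
next
  case (unit u b v)
  thus ?case using amalg_eq.unit[of G H u b "v @ w"] by simp
next
  case (ident h u v)
  thus ?case using amalg_eq.ident[of h H G u "v @ w"] by simp
qed (blast intro: amalg_eq.intros)+

lemma amalg_eq_append_left: "amalg_eq G H u v \<Longrightarrow> amalg_eq G H (w @ u) (w @ v)"
proof (induction rule: amalg_eq.induct)
  case (merge x y u b v)
  thus ?case using amalg_eq.merge[of x G y H "w @ u" b v] by simp
next
  case (unit u b v)
  thus ?case using amalg_eq.unit[of G H "w @ u" b v] by simp
next
  case (ident h u v)
  thus ?case using amalg_eq.ident[of h H G "w @ u" v] by simp
qed (blast intro: amalg_eq.intros)+

lemma amalg_class_self: "w \<in> amalg_words G \<Longrightarrow> w \<in> amalg_class G H w"
  unfolding amalg_class_def by (blast intro: amalg_eq.refl)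

lemma amalg_class_eq_iff:
  "v \<in> amalg_words G \<Longrightarrow> amalg_class G H w = amalg_class G H v \<longleftrightarrow> amalg_eq G H w v"
  unfolding amalg_class_def by (blast intro: amalg_eq.intros)

lemma amalg_product_mult_class:
  assumes "v \<in> amalg_words G" "w \<in> amalg_words G"
  shows "amalg_class G H v \<otimes>\<^bsub>amalg_product G H\<^esub> amalg_class G H w = amalg_class G H (v @ w)"
proof -
  define v' where "v' = (SOME v'. v' \<in> amalg_class G H v)"
  define w' where "w' = (SOME w'. w' \<in> amalg_class G H w)"
  have "v' \<in> amalg_class G H v" "w' \<in> amalg_class G H w"
    unfolding v'_def w'_def using assms by (auto intro: someI amalg_class_self)
  hence "amalg_eq G H v v'" "amalg_eq G H w w'" by (auto simp: amalg_class_def)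
  hence "amalg_eq G H (v @ w) (v' @ w')"
    by (meson amalg_eq.trans amalg_eq_append_left amalg_eq_append_right)
  hence "amalg_class G H (v' @ w') = amalg_class G H (v @ w)"
    unfolding amalg_class_def by (blast intro: amalg_eq.intros)
  thus ?thesis by (simp add: amalg_product_def v'_def w'_def)
qed

lemma amalg_copy_hom: "(\<lambda>g. amalg_class G H [(b, g)]) \<in> hom G (amalg_product G H)"
proof (rule homI)
  fix g assume "g \<in> carrier G"
  thus "amalg_class G H [(b, g)] \<in> carrier (amalg_product G H)"
    by (auto simp: amalg_product_def amalg_words_def)
next
  fix x y assume xy: "x \<in> carrier G" "y \<in> carrier G"
  hence "amalg_class G H [(b, x)] \<otimes>\<^bsub>amalg_product G H\<^esub> amalg_class G H [(b, y)]
      = amalg_class G H ([] @ [(b, x), (b, y)] @ [])"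
    by (simp add: amalg_product_mult_class amalg_words_def)
  also have "\<dots> = amalg_class G H [(b, x \<otimes>\<^bsub>G\<^esub> y)]"
    using amalg_eq.merge[OF xy, of H "[]" b "[]"] unfolding amalg_class_def
    by (auto intro: amalg_eq.intros)
  finally show "amalg_class G H [(b, x \<otimes>\<^bsub>G\<^esub> y)]
      = amalg_class G H [(b, x)] \<otimes>\<^bsub>amalg_product G H\<^esub> amalg_class G H [(b, y)]" ..
qed

lemma amalg_copies_agree: "h \<in> H \<Longrightarrow> amalg_class G H [(False, h)] = amalg_class G H [(True, h)]"
  using amalg_eq.ident[of h H G "[]" "[]"] unfolding amalg_class_def by (auto intro: amalg_eq.intros)

lemma amalg_eq_action_invariant:
  fixes act :: "bool \<Rightarrow> 'a \<Rightarrow> 's \<Rightarrow> 's"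
  assumes "\<And>b x y. x \<in> carrier G \<Longrightarrow> y \<in> carrier G \<Longrightarrow> act b (x \<otimes>\<^bsub>G\<^esub> y) = act b x \<circ> act b y"
    and "\<And>b. act b \<one>\<^bsub>G\<^esub> = id"
    and "\<And>h. h \<in> H \<Longrightarrow> act False h = act True h"
    and "amalg_eq G H v w"
  shows "foldr (case_prod act) v = foldr (case_prod act) w"
  using assms(4) by induction (simp_all add: assms(1-3) fun_eq_iff)

lemma amalg_copies_distinct_by_twisted_action:
  fixes \<alpha> :: "'a \<Rightarrow> 's \<Rightarrow> 's" and \<sigma> :: "'s \<Rightarrow> 's"
  assumes mult: "\<And>x y s. x \<in> carrier G \<Longrightarrow> y \<in> carrier G \<Longrightarrow> s \<in> X \<Longrightarrow>
      \<alpha> (x \<otimes>\<^bsub>G\<^esub> y) s = \<alpha> x (\<alpha> y s)"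
    and one: "\<And>s. s \<in> X \<Longrightarrow> \<alpha> \<one>\<^bsub>G\<^esub> s = s"
    and closed: "\<And>x s. x \<in> carrier G \<Longrightarrow> s \<in> X \<Longrightarrow> \<alpha> x s \<in> X"
    and \<sigma>_closed: "\<And>s. s \<in> X \<Longrightarrow> \<sigma> s \<in> X"
    and \<sigma>_involution: "\<And>s. s \<in> X \<Longrightarrow> \<sigma> (\<sigma> s) = s"
    and \<sigma>_commute: "\<And>h s. h \<in> H \<Longrightarrow> s \<in> X \<Longrightarrow> \<sigma> (\<alpha> h s) = \<alpha> h (\<sigma> s)"
    and g: "g \<in> carrier G" and s: "s \<in> X" and twisted: "\<sigma> (\<alpha> g (\<sigma> s)) \<noteq> \<alpha> g s"
  shows "amalg_class G H [(False, g)] \<noteq> amalg_class G H [(True, g)]"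
proof
  define act where
    "act b x t = (if t \<in> X then if b then \<sigma> (\<alpha> x (\<sigma> t)) else \<alpha> x t else t)" for b x t
  assume "amalg_class G H [(False, g)] = amalg_class G H [(True, g)]"
  hence "amalg_eq G H [(False, g)] [(True, g)]"
    using g by (simp add: amalg_class_eq_iff amalg_words_def)
  hence "foldr (case_prod act) [(False, g)] = foldr (case_prod act) [(True, g)]"
  proof (rule amalg_eq_action_invariant[rotated 3])
    fix b x y assume "x \<in> carrier G" "y \<in> carrier G"
    thus "act b (x \<otimes>\<^bsub>G\<^esub> y) = act b x \<circ> act b y"
      by (auto simp: fun_eq_iff act_def mult closed \<sigma>_closed \<sigma>_involution)
  next
    fix b show "act b \<one>\<^bsub>G\<^esub> = id"
      by (auto simp: fun_eq_iff act_def one \<sigma>_closed \<sigma>_involution)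
  next
    fix h assume "h \<in> H"
    thus "act False h = act True h"
      by (auto simp: fun_eq_iff act_def \<sigma>_commute \<sigma>_closed \<sigma>_involution)
  qed
  hence "act False g s = act True g s" by (simp add: fun_eq_iff)
  thus False using s twisted by (simp add: act_def)
qed

section \<open>Abels's group\<close>

text \<open>Indices start at 0: \<open>transvection4 0 3 x\<close> is the matrix \<open>I + x E\<^sub>1\<^sub>4\<close> of the paper.\<close>

definition transvection4 :: "nat \<Rightarrow> nat \<Rightarrow> rat \<Rightarrow> rat mat" where
  "transvection4 a b x = mat 4 4 (\<lambda>(i, j). if i = j then 1 else if (i, j) = (a, b) then x else 0)"

definition dilation4 :: "nat \<Rightarrow> rat mat" where
  "dilation4 p = mat 4 4 (\<lambda>(i, j). if i = j then if i = 1 then of_nat p else 1 else 0)"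

lemma less_4_cases: "i < (4::nat) \<longleftrightarrow> i = 0 \<or> i = 1 \<or> i = 2 \<or> i = 3"
  by auto

lemma mat4_mult:
  fixes f g :: "nat \<times> nat \<Rightarrow> 'a :: comm_semiring_0"
  shows "mat 4 4 f * mat 4 4 g =
    mat 4 4 (\<lambda>(i, j). f (i, 0) * g (0, j) + f (i, 1) * g (1, j) + f (i, 2) * g (2, j) + f (i, 3) * g (3, j))"
  by (rule eq_matI) (auto simp: scalar_prod_def numeral_eq_Suc sum.atLeast0_lessThan_Suc)

lemma transvection4_add:
  assumes "0 < b" "b < 4"
  shows "transvection4 0 b x * transvection4 0 b y = transvection4 0 b (x + y)"
proof -
  have "b = 1 \<or> b = 2 \<or> b = 3" using assms by auto
  thus ?thesis unfolding transvection4_def mat4_mult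
    by (elim disjE) (rule eq_matI, auto simp: less_4_cases)+
qed

lemma transvection4_commutator:
  "transvection4 0 1 a * transvection4 1 3 c
    = transvection4 0 3 (a * c) * (transvection4 1 3 c * transvection4 0 1 a)"
  unfolding transvection4_def mat4_mult by (rule eq_matI) (auto simp: less_4_cases)

lemma dilation4_conjugates_transvection4:
  "dilation4 p * transvection4 0 1 (of_nat p * a) = transvection4 0 1 a * dilation4 p"
  unfolding transvection4_def dilation4_def mat4_mult by (rule eq_matI) (auto simp: less_4_cases)

lemma transvection4_zero: "transvection4 a b 0 = 1\<^sub>m 4"
  unfolding transvection4_def by (rule eq_matI) auto

lemma transvection4_carrier_mat [simp]: "transvection4 a b x \<in> carrier_mat 4 4"
  unfolding transvection4_def by simp

lemma Zinvp_fraction: "of_int a / of_nat p ^ m \<in> Zinvp p"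
  unfolding Zinvp_def by blast

lemma Zinvp_int: "of_int a \<in> Zinvp p"
  using Zinvp_fraction[of a p 0] by simp

lemma Zinvp_mult:
  assumes "x \<in> Zinvp p" "y \<in> Zinvp p" shows "x * y \<in> Zinvp p"
proof -
  obtain a b :: int and k m :: nat where "x = of_int a / of_nat p ^ k" "y = of_int b / of_nat p ^ m"
    using assms unfolding Zinvp_def by blast
  hence "x * y = of_int (a * b) / of_nat p ^ (k + m)" by (simp add: power_add)
  thus ?thesis using Zinvp_fraction[of "a * b" p "k + m"] by simp
qed

lemma abels_group_mult [simp]: "g \<otimes>\<^bsub>abels_group p\<^esub> h = g * h"
  unfolding abels_group_def by simp

lemma abels_group_one [simp]: "\<one>\<^bsub>abels_group p\<^esub> = 1\<^sub>m 4"
  unfolding abels_group_def by simp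

lemma abels_group_carrier_mat: "g \<in> carrier (abels_group p) \<Longrightarrow> g \<in> carrier_mat 4 4"
  unfolding abels_group_def by simp

lemma transvection4_in_abels_group:
  assumes "a < b" "b < 4" "x \<in> Zinvp p"
  shows "transvection4 a b x \<in> carrier (abels_group p)"
  using assms Zinvp_int[of 0 p]
  unfolding abels_group_def transvection4_def by (auto intro!: exI[of _ 0])

lemma transvection4_product_in_abels_group:
  assumes "a \<in> Zinvp p" "c \<in> Zinvp p"
  shows "transvection4 1 3 c * transvection4 0 1 a \<in> carrier (abels_group p)"
proof -
  have "transvection4 1 3 c * transvection4 0 1 a
      = mat 4 4 (\<lambda>(i, j). if i = j then 1 else if (i, j) = (0, 1) then a
          else if (i, j) = (1, 3) then c else 0)"
    unfolding transvection4_def mat4_mult by (rule eq_matI) (auto simp: less_4_cases)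
  thus ?thesis using assms Zinvp_int[of 0 p]
    unfolding abels_group_def by (auto intro!: exI[of _ 0])
qed

lemma dilation4_in_abels_group: "dilation4 p \<in> carrier (abels_group p)"
proof -
  have "\<exists>k n :: int. (of_nat p :: rat) = of_nat p powi k \<and> (1 :: rat) = of_nat p powi n"
    by (rule exI[of _ 1], rule exI[of _ 0]) simp
  thus ?thesis using Zinvp_int[of 0 p] by (auto simp: abels_group_def dilation4_def)
qed

lemma abels_N_iff: "h \<in> abels_N \<longleftrightarrow> (\<exists>m::int. h = transvection4 0 3 (of_int m))"
proof -
  have "1\<^sub>m 4 + mat 4 4 (\<lambda>(i, j). if (i, j) = (0, 3) then c else 0) = transvection4 0 3 c"
    for c :: rat
    unfolding transvection4_def by (rule eq_matI) auto
  thus ?thesis unfolding abels_N_def by auto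
qed

definition coset_swap :: "rat \<Rightarrow> rat \<Rightarrow> rat" where
  "coset_swap d x = (if x \<in> \<int> then x + d else if x - d \<in> \<int> then x - d else x)"

lemma coset_swap_involution:
  assumes "d \<notin> \<int>" shows "coset_swap d (coset_swap d x) = x"
proof (cases "x \<in> \<int>")
  case True
  hence "x + d \<notin> \<int>" using assms by (metis Ints_diff add_diff_cancel_left')
  thus ?thesis using True by (simp add: coset_swap_def)
qed (auto simp: coset_swap_def)

lemma coset_swap_add_int:
  assumes "k \<in> \<int>" shows "coset_swap d (x + k) = coset_swap d x + k"
proof -
  have "x + k \<in> \<int> \<longleftrightarrow> x \<in> \<int>" "x + k - d \<in> \<int> \<longleftrightarrow> x - d \<in> \<int>"
    using assms by (metis Ints_add Ints_diff add_diff_cancel_right' diff_add_eq)+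
  thus ?thesis by (simp add: coset_swap_def)
qed

lemma coset_swap_double_neq:
  assumes "d \<notin> \<int>" shows "coset_swap d (2 * d) \<noteq> d"
proof (cases "2 * d \<in> \<int>")
  case True
  hence "coset_swap d (2 * d) = 3 * d" by (simp add: coset_swap_def)
  moreover have "d \<noteq> 0" using assms by auto
  ultimately show ?thesis by simp
next
  case False
  thus ?thesis using assms by (auto simp: coset_swap_def)
qed

text \<open>Left multiplication by \<open>transvection4 0 3 m\<close> shifts the entry \<open>(0, 3)\<close> by
  \<open>m * A $$ (3, 3)\<close>, an integer when \<open>A $$ (3, 3) = 1\<close>; elsewhere the twist does nothing.\<close>

definition abels_twist :: "nat \<Rightarrow> rat mat \<Rightarrow> rat mat" where
  "abels_twist p A = mat 4 4 (\<lambda>(i, j).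
     if (i, j) = (0, 3) \<and> A $$ (3, 3) = 1 then coset_swap (1 / of_nat p) (A $$ (0, 3)) else A $$ (i, j))"

lemma inverse_not_int:
  assumes "1 < p" shows "1 / of_nat p \<notin> (\<int> :: rat set)"
proof
  assume "1 / of_nat p \<in> (\<int> :: rat set)"
  then obtain z where "1 / of_nat p = (of_int z :: rat)" by (auto elim: Ints_cases)
  hence "of_int (z * int p) = (1 :: rat)" using assms by (simp add: field_simps)
  hence "z * int p = 1" by (simp only: of_int_eq_1_iff)
  thus False using assms by (simp add: zmult_eq_1_iff)
qed

lemma abels_twist_carrier_mat [simp]: "abels_twist p A \<in> carrier_mat 4 4"
  by (simp add: abels_twist_def)

lemma abels_twist_involution:
  "1 < p \<Longrightarrow> A \<in> carrier_mat 4 4 \<Longrightarrow> abels_twist p (abels_twist p A) = A"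
  by (rule eq_matI) (auto simp: abels_twist_def coset_swap_involution inverse_not_int)

lemma transvection4_03_mult:
  assumes "B \<in> carrier_mat 4 4"
  shows "transvection4 0 3 c * B =
    mat 4 4 (\<lambda>(i, j). if i = 0 then B $$ (0, j) + c * B $$ (3, j) else B $$ (i, j))"
proof -
  have "B = mat 4 4 (\<lambda>(i, j). B $$ (i, j))" using assms by (intro eq_matI) auto
  hence "transvection4 0 3 c * B = transvection4 0 3 c * mat 4 4 (\<lambda>(i, j). B $$ (i, j))" by simp
  thus ?thesis unfolding transvection4_def mat4_mult by (intro eq_matI) (auto simp: less_4_cases)
qed

lemma abels_twist_commutes_N:
  assumes "h \<in> abels_N" "A \<in> carrier_mat 4 4"
  shows "abels_twist p (h * A) = h * abels_twist p A"
proof -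
  obtain m :: int where "h = transvection4 0 3 (of_int m)" using assms(1) abels_N_iff by blast
  thus ?thesis using assms(2)
    by (intro eq_matI) (auto simp: abels_twist_def transvection4_03_mult coset_swap_add_int)
qed

lemma amalg_abels_copies_distinct:
  assumes "1 < p"
  shows "amalg_class (abels_group p) abels_N [(False, transvection4 0 3 (1 / of_nat p))]
       \<noteq> amalg_class (abels_group p) abels_N [(True, transvection4 0 3 (1 / of_nat p))]"
proof (rule amalg_copies_distinct_by_twisted_action[where X = "carrier_mat 4 4"
      and \<alpha> = "(*)" and \<sigma> = "abels_twist p" and s = "1\<^sub>m 4"])
  let ?z = "transvection4 0 3 (1 / of_nat p)"
  show "x \<otimes>\<^bsub>abels_group p\<^esub> y * A = x * (y * A)"
    if "x \<in> carrier (abels_group p)" "y \<in> carrier (abels_group p)" "A \<in> carrier_mat 4 4" for x y A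
    using that by (auto dest!: abels_group_carrier_mat)
  show "x * A \<in> carrier_mat 4 4" if "x \<in> carrier (abels_group p)" "A \<in> carrier_mat 4 4" for x A
    using that by (auto dest!: abels_group_carrier_mat)
  show "abels_twist p (abels_twist p A) = A" if "A \<in> carrier_mat 4 4" for A
    using abels_twist_involution[OF assms that] .
  show "abels_twist p (h * A) = h * abels_twist p A" if "h \<in> abels_N" "A \<in> carrier_mat 4 4" for h A
    using abels_twist_commutes_N[OF that] .
  show "?z \<in> carrier (abels_group p)"
    using transvection4_in_abels_group Zinvp_fraction[of 1 p 1] by simp
  have "abels_twist p (1\<^sub>m 4) = ?z"
    by (rule eq_matI) (auto simp: abels_twist_def transvection4_def coset_swap_def)
  moreover have "?z * ?z = transvection4 0 3 (2 * (1 / of_nat p))"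
    by (simp add: transvection4_add)
  moreover have "abels_twist p (transvection4 0 3 (2 * (1 / of_nat p))) $$ (0, 3) \<noteq> ?z $$ (0, 3)"
    using coset_swap_double_neq[OF inverse_not_int[OF assms]]
    by (simp add: abels_twist_def transvection4_def)
  ultimately show "abels_twist p (?z * abels_twist p (1\<^sub>m 4)) \<noteq> ?z * 1\<^sub>m 4"
    by (metis right_mult_one_mat transvection4_carrier_mat)
qed auto

section \<open>Unitary representations of Abels's group\<close>

context
  fixes \<rho> :: "rat mat \<Rightarrow> complex mat" and p n :: nat
  assumes rep: "\<rho> \<in> hom (abels_group p) (unitary_group n)"
begin

lemma abels_rep_unitary: "g \<in> carrier (abels_group p) \<Longrightarrow> \<rho> g \<in> carrier (unitary_group n)"
  using hom_in_carrier[OF rep] .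

lemma abels_rep_carrier_mat: "g \<in> carrier (abels_group p) \<Longrightarrow> \<rho> g \<in> carrier_mat n n"
  using abels_rep_unitary by (simp add: unitary_group_carrier_iff)

lemma abels_rep_mult:
  "g \<in> carrier (abels_group p) \<Longrightarrow> h \<in> carrier (abels_group p) \<Longrightarrow> \<rho> (g * h) = \<rho> g * \<rho> h"
  using hom_mult[OF rep] by simp

lemma abels_rep_transvection4_01_of_nat:
  "\<rho> (transvection4 0 1 (of_nat k)) = \<rho> (transvection4 0 1 1) ^\<^sub>m k"
proof (induction k)
  case 0
  have "1\<^sub>m 4 \<in> carrier (abels_group p)" using transvection4_in_abels_group[of 0 1 0 p]
    using Zinvp_int[of 0 p] by (simp add: transvection4_zero)
  hence "\<rho> (1\<^sub>m 4) = 1\<^sub>m n" using unitary_rep_idempotent[OF rep] by simp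
  moreover have "\<rho> (transvection4 0 1 1) \<in> carrier_mat n n"
    using abels_rep_carrier_mat transvection4_in_abels_group Zinvp_int[of 1 p] by simp
  ultimately show ?case by (simp add: transvection4_zero)
next
  case (Suc k)
  have "transvection4 0 1 (of_nat (Suc k)) = transvection4 0 1 (of_nat k) * transvection4 0 1 1"
    by (simp add: transvection4_add add.commute)
  thus ?case using Suc.IH abels_rep_mult transvection4_in_abels_group
      Zinvp_int[of "int k" p] Zinvp_int[of 1 p] by simp
qed

lemma abels_rep_commutator:
  assumes a: "a \<in> Zinvp p" and c: "c \<in> Zinvp p" and trivial: "\<rho> (transvection4 0 1 a) = 1\<^sub>m n"
  shows "\<rho> (transvection4 0 3 (a * c)) = 1\<^sub>m n"
proof -
  have u: "transvection4 0 1 a \<in> carrier (abels_group p)"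
    and v: "transvection4 1 3 c \<in> carrier (abels_group p)"
    and z: "transvection4 0 3 (a * c) \<in> carrier (abels_group p)"
    and vu: "transvection4 1 3 c * transvection4 0 1 a \<in> carrier (abels_group p)"
    using a c Zinvp_mult transvection4_in_abels_group transvection4_product_in_abels_group by auto
  have "\<rho> (transvection4 1 3 c) = \<rho> (transvection4 0 1 a) * \<rho> (transvection4 1 3 c)"
    using trivial abels_rep_carrier_mat[OF v] by simp
  also have "\<dots> = \<rho> (transvection4 0 3 (a * c)) * (\<rho> (transvection4 1 3 c) * \<rho> (transvection4 0 1 a))"
    using transvection4_commutator[of a c] abels_rep_mult u v z vu by metis
  also have "\<dots> = \<rho> (transvection4 0 3 (a * c)) * \<rho> (transvection4 1 3 c)"
    using trivial abels_rep_carrier_mat[OF v] by simp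
  finally show ?thesis
    using unitary_right_cancel[OF abels_rep_carrier_mat[OF z] abels_rep_unitary[OF v]] by simp
qed

lemma abels_rep_transvection4_01_finite_order:
  assumes "1 < p" shows "\<exists>K>0. \<rho> (transvection4 0 1 (of_nat K)) = 1\<^sub>m n"
proof -
  have u1: "transvection4 0 1 1 \<in> carrier (abels_group p)"
    and up: "transvection4 0 1 (of_nat p) \<in> carrier (abels_group p)"
    using transvection4_in_abels_group Zinvp_int[of 1 p] Zinvp_int[of "int p" p] by auto
  have "\<rho> (dilation4 p) * \<rho> (transvection4 0 1 1) ^\<^sub>m p
      = \<rho> (transvection4 0 1 1) * \<rho> (dilation4 p)"
    using dilation4_conjugates_transvection4[of p 1] abels_rep_transvection4_01_of_nat[of p]
      abels_rep_mult[OF dilation4_in_abels_group up] abels_rep_mult[OF u1 dilation4_in_abels_group]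
    by simp
  from unitary_finite_order_if_conjugate_to_power[OF abels_rep_unitary[OF u1]
      abels_rep_unitary[OF dilation4_in_abels_group] this assms]
  show ?thesis by (metis abels_rep_transvection4_01_of_nat)
qed

lemma abels_rep_kills_central_fraction:
  assumes "prime p" shows "\<exists>M. coprime M p \<and> \<rho> (transvection4 0 3 (of_nat M / of_nat p)) = 1\<^sub>m n"
proof -
  have p: "1 < p" using assms prime_gt_1_nat by blast
  obtain K where K: "K > 0" "\<rho> (transvection4 0 1 (of_nat K)) = 1\<^sub>m n"
    using abels_rep_transvection4_01_finite_order[OF p] by blast
  obtain M where M: "K = p ^ multiplicity p K * M" "\<not> p dvd M"
    using multiplicity_decompose'[of K p] K(1) p by auto
  define e where "e = multiplicity p K"
  have "(of_nat K :: rat) = of_nat p ^ e * of_nat M" by (metis M(1) e_def of_nat_mult of_nat_power)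
  hence "of_nat K * (1 / of_nat p ^ Suc e) = (of_nat M / of_nat p :: rat)"
    using p by (simp add: field_simps)
  moreover have "\<rho> (transvection4 0 3 (of_nat K * (1 / of_nat p ^ Suc e))) = 1\<^sub>m n"
    using abels_rep_commutator[OF _ Zinvp_fraction[of 1 p "Suc e"] K(2)] Zinvp_int[of "int K" p]
    by simp
  moreover have "coprime M p"
    using prime_imp_coprime[OF assms M(2)] by (simp add: coprime_commute)
  ultimately show ?thesis by metis
qed

lemma abels_rep_central_periodic:
  assumes period: "\<rho> (transvection4 0 3 (of_nat M / of_nat p)) = 1\<^sub>m n"
  shows "\<rho> (transvection4 0 3 ((of_int a + of_nat (k * M)) / of_nat p))
       = \<rho> (transvection4 0 3 (of_int a / of_nat p))"
proof (induction k)
  case (Suc k)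
  let ?x = "(of_int a + of_nat (k * M)) / of_nat p :: rat"
  have mem: "transvection4 0 3 (of_int b / of_nat p) \<in> carrier (abels_group p)" for b
    using transvection4_in_abels_group Zinvp_fraction[of b p 1] by simp
  have "transvection4 0 3 ((of_int a + of_nat (Suc k * M)) / of_nat p)
      = transvection4 0 3 ?x * transvection4 0 3 (of_nat M / of_nat p)"
    by (simp add: transvection4_add add_divide_distrib algebra_simps)
  also have "\<rho> \<dots> = \<rho> (transvection4 0 3 ?x)"
    using abels_rep_mult[OF mem[of "a + int (k * M)"] mem[of "int M"]] period
      abels_rep_carrier_mat[OF mem[of "a + int (k * M)"]] by simp
  finally show ?case using Suc.IH by simp
qed simp

end

lemma amalg_abels_unitary_rep_identifies_copies:
  assumes p: "prime p"
    and \<psi>: "\<psi> \<in> hom (amalg_product (abels_group p) abels_N) (unitary_group n)"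
  shows "\<psi> (amalg_class (abels_group p) abels_N [(False, transvection4 0 3 (1 / of_nat p))])
       = \<psi> (amalg_class (abels_group p) abels_N [(True, transvection4 0 3 (1 / of_nat p))])"
proof -
  define \<rho> where "\<rho> b = \<psi> \<circ> (\<lambda>g. amalg_class (abels_group p) abels_N [(b, g)])" for b
  have rep: "\<rho> b \<in> hom (abels_group p) (unitary_group n)" for b
    unfolding \<rho>_def using amalg_copy_hom \<psi> by (rule hom_compose)
  obtain M1 M2 where M: "coprime M1 p" "\<rho> False (transvection4 0 3 (of_nat M1 / of_nat p)) = 1\<^sub>m n"
    "coprime M2 p" "\<rho> True (transvection4 0 3 (of_nat M2 / of_nat p)) = 1\<^sub>m n"
    using abels_rep_kills_central_fraction[OF rep p] by metis
  obtain c j where "p * c = M1 * M2 * j + gcd p (M1 * M2)"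
    using bezout_nat[of p "M1 * M2"] p by (auto simp: prime_gt_0_nat)
  hence "(of_int 1 + of_nat (j * M2 * M1)) / of_nat p = (of_int (int c) :: rat)"
        "(of_int 1 + of_nat (j * M1 * M2)) / of_nat p = (of_int (int c) :: rat)"
    using M(1,3) p by (auto simp: coprime_commute field_simps prime_gt_0_nat
                           simp flip: of_nat_mult of_nat_add)
  hence "\<rho> False (transvection4 0 3 (1 / of_nat p)) = \<rho> False (transvection4 0 3 (of_int c))"
        "\<rho> True (transvection4 0 3 (1 / of_nat p)) = \<rho> True (transvection4 0 3 (of_int c))"
    using abels_rep_central_periodic[OF rep M(2), of 1 "j * M2"]
          abels_rep_central_periodic[OF rep M(4), of 1 "j * M1"] by simp_all
  moreover have "transvection4 0 3 (of_int c) \<in> abels_N"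
    unfolding abels_N_iff by (metis of_int_of_nat_eq)
  ultimately show ?thesis by (simp add: \<rho>_def amalg_copies_agree)
qed

theorem proposition8p3:
  fixes p :: nat
  assumes "prime p"
  shows "\<not> MAP (amalg_product (abels_group p) abels_N)"
proof -
  let ?z = "transvection4 0 3 (1 / of_nat p)"
  let ?class = "\<lambda>b. amalg_class (abels_group p) abels_N [(b, ?z)]"
  have "?z \<in> carrier (abels_group p)"
    using transvection4_in_abels_group Zinvp_fraction[of 1 p 1] by simp
  hence "?class b \<in> carrier (amalg_product (abels_group p) abels_N)" for b
    by (metis amalg_copy_hom hom_in_carrier)
  moreover have "?class False \<noteq> ?class True"
    using amalg_abels_copies_distinct assms prime_gt_1_nat by blast
  ultimately show ?thesis
    using amalg_abels_unitary_rep_identifies_copies[OF assms] unfolding MAP_def by blast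
qed

end
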